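(* For every graph $G$, $\operatorname{th}_{\operatorname{H}}(G)=|V(G)|$ if and only if $G$ contains none of $2K_2$, $K_2\cup\overline{K_2}$, $\overline{K_4}$ as an induced subgraph.
   Context: All graphs are finite, simple and undirected; $2K_2$ is two disjoint edges, $K_2\cup\overline{K_2}$ is an edge plus two isolated vertices, and $\overline{K_4}$ is four isolated vertices. Hopping color change rule: a blue vertex $v$ may force a white vertex $w$ to become blue if $v$ has not previously performed a force and every neighbor of $v$ is blue. For an initial blue set $B$, a chronological list of forces of $B$ is a sequence of such forces applied one at a time until no further force is possible; its underlying unordered set is a set of forces of $B$. $B$ is a hopping forcing set if some chronological list of forces of $B$ turns all vertices blue. For a set of forces $\mathcal F$ of $B$, let $\mathcal F^{(0)}=B$ and for $t\geq1$ let $\mathcal F^{(t)}$ be the set of vertices $w\notin U_{t-1}:=\bigcup_{i=0}^{t-1}\mathcal F^{(i)}$ for which there is $(v\to w)\in\mathcal F$ with $v\in U_{t-1}$ and all neighbors of $v$ in $U_{t-1}$. $\operatorname{pt}_{\operatorname{H}}(G;\mathcal F)$ is the least $t$ with $\bigcup_{i=0}^t\mathcal F^{(i)}=V(G)$ ($\infty$ if none); $\operatorname{pt}_{\operatorname{H}}(G;B)$ is the minimum over sets of forces $\mathcal F$ of $B$ ($\infty$ if $B$ is not a hopping forcing set). $\operatorname{th}_{\operatorname{H}}(G)=\min_{B\subseteq V(G)}\big(|B|+\operatorname{pt}_{\operatorname{H}}(G;B)\big)$. *)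

theory Defs
  imports Main "HOL-Library.Extended_Nat"
begin

definition simple_graph :: "'a set \<Rightarrow> ('a \<Rightarrow> 'a \<Rightarrow> bool) \<Rightarrow> bool" where
  "simple_graph V E \<longleftrightarrow> finite V \<and>
     (\<forall>u v. E u v \<longrightarrow> u \<in> V \<and> v \<in> V \<and> u \<noteq> v \<and> E v u)"

definition nbhd :: "'a set \<Rightarrow> ('a \<Rightarrow> 'a \<Rightarrow> bool) \<Rightarrow> 'a \<Rightarrow> 'a set" where
  "nbhd V E v = {u \<in> V. E v u}"

text \<open>Hopping force v -> w is valid with current blue set S and set P of vertices
  that have already performed a force.\<close>
definition hop_force_ok :: "'a set \<Rightarrow> ('a \<Rightarrow> 'a \<Rightarrow> bool) \<Rightarrow> 'a set \<Rightarrow> 'a set \<Rightarrow> 'a \<Rightarrow> 'a \<Rightarrow> bool" where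
  "hop_force_ok V E S P v w \<longleftrightarrow>
     v \<in> S \<and> v \<notin> P \<and> w \<in> V \<and> w \<notin> S \<and> nbhd V E v \<subseteq> S"

fun hop_seq_ok :: "'a set \<Rightarrow> ('a \<Rightarrow> 'a \<Rightarrow> bool) \<Rightarrow> 'a set \<Rightarrow> 'a set \<Rightarrow> ('a \<times> 'a) list \<Rightarrow> bool" where
  "hop_seq_ok V E S P [] = True"
| "hop_seq_ok V E S P ((v, w) # fs) =
     (hop_force_ok V E S P v w \<and> hop_seq_ok V E (insert w S) (insert v P) fs)"

definition chron_list :: "'a set \<Rightarrow> ('a \<Rightarrow> 'a \<Rightarrow> bool) \<Rightarrow> 'a set \<Rightarrow> ('a \<times> 'a) list \<Rightarrow> bool" where
  "chron_list V E B fs \<longleftrightarrow> B \<subseteq> V \<and> hop_seq_ok V E B {} fs \<and>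
     \<not> (\<exists>v w. hop_force_ok V E (B \<union> snd ` set fs) (fst ` set fs) v w)"

definition sets_of_forces :: "'a set \<Rightarrow> ('a \<Rightarrow> 'a \<Rightarrow> bool) \<Rightarrow> 'a set \<Rightarrow> ('a \<times> 'a) set set" where
  "sets_of_forces V E B = {set fs | fs. chron_list V E B fs}"

definition hopping_forcing_set :: "'a set \<Rightarrow> ('a \<Rightarrow> 'a \<Rightarrow> bool) \<Rightarrow> 'a set \<Rightarrow> bool" where
  "hopping_forcing_set V E B \<longleftrightarrow> (\<exists>fs. chron_list V E B fs \<and> B \<union> snd ` set fs = V)"

fun hop_U :: "'a set \<Rightarrow> ('a \<Rightarrow> 'a \<Rightarrow> bool) \<Rightarrow> 'a set \<Rightarrow> ('a \<times> 'a) set \<Rightarrow> nat \<Rightarrow> 'a set" where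
  "hop_U V E B F 0 = B"
| "hop_U V E B F (Suc t) = hop_U V E B F t \<union>
     {w. w \<notin> hop_U V E B F t \<and> (\<exists>v. (v, w) \<in> F \<and> v \<in> hop_U V E B F t \<and>
                                         nbhd V E v \<subseteq> hop_U V E B F t)}"

definition pt_H_forces :: "'a set \<Rightarrow> ('a \<Rightarrow> 'a \<Rightarrow> bool) \<Rightarrow> 'a set \<Rightarrow> ('a \<times> 'a) set \<Rightarrow> enat" where
  "pt_H_forces V E B F =
     (if \<exists>t. hop_U V E B F t = V then enat (LEAST t. hop_U V E B F t = V) else \<infinity>)"

definition pt_H :: "'a set \<Rightarrow> ('a \<Rightarrow> 'a \<Rightarrow> bool) \<Rightarrow> 'a set \<Rightarrow> enat" where
  "pt_H V E B = (if hopping_forcing_set V E B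
                 then (INF F \<in> sets_of_forces V E B. pt_H_forces V E B F) else \<infinity>)"

definition th_H :: "'a set \<Rightarrow> ('a \<Rightarrow> 'a \<Rightarrow> bool) \<Rightarrow> enat" where
  "th_H V E = (INF B \<in> Pow V. enat (card B) + pt_H V E B)"

definition has_induced :: "'a set \<Rightarrow> ('a \<Rightarrow> 'a \<Rightarrow> bool) \<Rightarrow> 'b set \<Rightarrow> ('b \<Rightarrow> 'b \<Rightarrow> bool) \<Rightarrow> bool" where
  "has_induced V E VH EH \<longleftrightarrow> (\<exists>f. inj_on f VH \<and> f ` VH \<subseteq> V \<and>
      (\<forall>x\<in>VH. \<forall>y\<in>VH. EH x y \<longleftrightarrow> E (f x) (f y)))"

text \<open>Pattern graphs on vertex set {0,1,2,3}.\<close>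
definition two_K2_E :: "nat \<Rightarrow> nat \<Rightarrow> bool" where
  "two_K2_E x y \<longleftrightarrow> {x, y} = {0, 1} \<or> {x, y} = {2, 3}"

definition K2_co_K2_E :: "nat \<Rightarrow> nat \<Rightarrow> bool" where
  "K2_co_K2_E x y \<longleftrightarrow> {x, y} = {0, 1}"

definition co_K4_E :: "nat \<Rightarrow> nat \<Rightarrow> bool" where
  "co_K4_E x y \<longleftrightarrow> False"

end

theory Submission imports Defs begin

text \<open>If u forces x and v forces y in the same round, all neighbours of u and v are
  already blue while x and y are not, so no edge joins {u, v} to {x, y}.  Without such a
  configuration every round therefore adds at most one blue vertex, and
  |B| + pt(G; B) \<ge> |V|, with equality for B = V.  Conversely, four such vertices let
  B = V - {x, y} colour everything in a single round, so th(G) \<le> |V| - 1.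
  The three forbidden graphs are exactly the 4-vertex graphs that split into two pairs with
  no edge between the pairs.\<close>

definition has_unlinked_pairs :: "'a set \<Rightarrow> ('a \<Rightarrow> 'a \<Rightarrow> bool) \<Rightarrow> bool" where
  "has_unlinked_pairs V E \<longleftrightarrow> (\<exists>u v x y. {u, v, x, y} \<subseteq> V \<and> distinct [u, v, x, y] \<and>
     \<not> E u x \<and> \<not> E u y \<and> \<not> E v x \<and> \<not> E v y)"

abbreviation has_forbidden_induced :: "'a set \<Rightarrow> ('a \<Rightarrow> 'a \<Rightarrow> bool) \<Rightarrow> bool" where
  "has_forbidden_induced V E \<equiv> has_induced V E {0::nat..3} two_K2_E \<or>
     has_induced V E {0::nat..3} K2_co_K2_E \<or> has_induced V E {0::nat..3} co_K4_E"

lemma has_induced_on_four: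
  assumes "{u, v, x, y} \<subseteq> V" "distinct [u, v, x, y]"
    and "\<forall>i\<in>{0..3}. \<forall>j\<in>{0..3}. P i j \<longleftrightarrow> E ([u, v, x, y] ! i) ([u, v, x, y] ! j)"
  shows "has_induced V E {0::nat..3} P"
proof -
  have four: "{0::nat..3} = {0, 1, 2, 3}" by auto
  have "inj_on (\<lambda>i. [u, v, x, y] ! i) {0..3}" "(\<lambda>i. [u, v, x, y] ! i) ` {0..3} \<subseteq> V"
    using assms(1,2) unfolding four inj_on_def by auto
  with assms(3) show ?thesis unfolding has_induced_def by blast
qed

lemma unlinked_pairs_imp_forbidden_induced:
  assumes "simple_graph V E" and "has_unlinked_pairs V E"
  shows "has_forbidden_induced V E"
proof -
  obtain u v x y where in_V: "{u, v, x, y} \<subseteq> V" and dist: "distinct [u, v, x, y]"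
    and unlinked: "\<not> E u x" "\<not> E u y" "\<not> E v x" "\<not> E v y"
    using assms(2) unfolding has_unlinked_pairs_def by blast
  have sym: "\<And>a b. E a b \<longleftrightarrow> E b a" and irrefl: "\<And>a. \<not> E a a"
    using assms(1) unfolding simple_graph_def by blast+
  have four: "{0::nat..3} = {0, 1, 2, 3}" by auto
  have pattern: "has_induced V E {0::nat..3} P"
    if "distinct [a, b, c, d]" "{a, b, c, d} \<subseteq> V"
       "\<not> E a c" "\<not> E a d" "\<not> E b c" "\<not> E b d"
       "\<And>i j. P i j \<longleftrightarrow> (E a b \<and> {i, j} = {0, 1} \<or> E c d \<and> {i, j} = {2, 3})" for a b c d P
    using that sym irrefl
    by (intro has_induced_on_four) (auto simp: four doubleton_eq_iff)
  consider "E u v" "E x y" | "E u v" "\<not> E x y" | "\<not> E u v" "E x y" | "\<not> E u v" "\<not> E x y"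
    by blast
  then show ?thesis
  proof cases
    case 1
    then show ?thesis using pattern[of u v x y two_K2_E] in_V dist unlinked
      by (auto simp: two_K2_E_def)
  next
    case 2
    then show ?thesis using pattern[of u v x y K2_co_K2_E] in_V dist unlinked
      by (auto simp: K2_co_K2_E_def)
  next
    case 3
    then show ?thesis using pattern[of x y u v K2_co_K2_E] in_V dist unlinked sym
      by (auto simp: K2_co_K2_E_def)
  next
    case 4
    then show ?thesis using pattern[of u v x y co_K4_E] in_V dist unlinked
      by (auto simp: co_K4_E_def)
  qed
qed

lemma forbidden_induced_imp_unlinked_pairs:
  assumes "has_forbidden_induced V E"
  shows "has_unlinked_pairs V E"
proof -
  obtain f P where f: "inj_on f {0..3}" "f ` {0..3} \<subseteq> V"
      "\<forall>i\<in>{0::nat..3}. \<forall>j\<in>{0..3}. P i j \<longleftrightarrow> E (f i) (f j)"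
    and P: "P = two_K2_E \<or> P = K2_co_K2_E \<or> P = co_K4_E"
    using assms unfolding has_induced_def by blast
  have four: "{0::nat..3} = set [0, 1, 2, 3]" by auto
  have unlinked: "\<not> E (f i) (f j)" if "i \<in> {0, 1}" "j \<in> {2, 3}" for i j
  proof -
    have "i \<in> {0..3}" "j \<in> {0..3}" using that by auto
    with f(3) have "P i j \<longleftrightarrow> E (f i) (f j)" by blast
    moreover have "\<not> P i j"
      using P that by (auto simp: two_K2_E_def K2_co_K2_E_def co_K4_E_def doubleton_eq_iff)
    ultimately show ?thesis by simp
  qed
  have "distinct (map f [0, 1, 2, 3])" using f(1) by (simp only: distinct_map four) simp
  moreover have "{f 0, f 1, f 2, f 3} \<subseteq> V" using f(2) by (auto simp: four)
  ultimately show ?thesis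
    using unlinked unfolding has_unlinked_pairs_def
    by (intro exI[of _ "f 0"] exI[of _ "f 1"] exI[of _ "f 2"] exI[of _ "f 3"]) simp
qed

lemma forbidden_induced_iff_unlinked_pairs:
  "simple_graph V E \<Longrightarrow> has_forbidden_induced V E \<longleftrightarrow> has_unlinked_pairs V E"
  using unlinked_pairs_imp_forbidden_induced forbidden_induced_imp_unlinked_pairs by blast

lemma th_H_le_card_plus_pt_H: "B \<subseteq> V \<Longrightarrow> th_H V E \<le> enat (card B) + pt_H V E B"
  unfolding th_H_def by (rule INF_lower) simp

lemma pt_H_le_pt_H_forces:
  assumes "chron_list V E B fs" and "B \<union> snd ` set fs = V"
  shows "pt_H V E B \<le> pt_H_forces V E B (set fs)"
proof -
  have "hopping_forcing_set V E B" "set fs \<in> sets_of_forces V E B"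
    using assms unfolding hopping_forcing_set_def sets_of_forces_def by auto
  then show ?thesis unfolding pt_H_def by (simp add: INF_lower)
qed

lemma pt_H_forces_le:
  assumes "hop_U V E B F t = V"
  shows "pt_H_forces V E B F \<le> enat t"
  using assms Least_le[of "\<lambda>t. hop_U V E B F t = V" t] unfolding pt_H_forces_def by auto

lemma th_H_le_card: "th_H V E \<le> enat (card V)"
proof -
  have "chron_list V E V []" unfolding chron_list_def hop_force_ok_def by simp
  then have "pt_H V E V \<le> 0"
    using pt_H_le_pt_H_forces[of V E V "[]"] pt_H_forces_le[of V E V "{}" 0]
    by (simp add: zero_enat_def)
  then show ?thesis using th_H_le_card_plus_pt_H[of V V E] by simp
qed

lemma th_H_less_card_if_unlinked_pairs:
  assumes "simple_graph V E" and "has_unlinked_pairs V E"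
  shows "th_H V E < enat (card V)"
proof -
  obtain a b c d where in_V: "{a, b, c, d} \<subseteq> V" and dist: "distinct [a, b, c, d]"
    and unlinked: "\<not> E a c" "\<not> E a d" "\<not> E b c" "\<not> E b d"
    using assms(2) unfolding has_unlinked_pairs_def by blast
  have fin: "finite V" using assms(1) unfolding simple_graph_def by blast
  define B where "B = V - {c, d}"
  define fs where "fs = [(a, c), (b, d)]"
  have nbhd_blue: "nbhd V E a \<subseteq> B" "nbhd V E b \<subseteq> B"
    using unlinked unfolding nbhd_def B_def by auto
  have all_blue: "B \<union> snd ` set fs = V" unfolding B_def fs_def using in_V by auto
  have "chron_list V E B fs"
    unfolding chron_list_def all_blue
    using nbhd_blue in_V dist by (auto simp: B_def fs_def hop_force_ok_def)
  moreover have "hop_U V E B (set fs) 1 = V"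
    using nbhd_blue in_V dist by (auto simp: B_def fs_def One_nat_def)
  ultimately have pt: "pt_H V E B \<le> 1"
    using pt_H_le_pt_H_forces[of V E B fs] all_blue pt_H_forces_le[of V E B "set fs" 1]
    by (simp add: one_enat_def)
  have "card {c, d} \<le> card V" using fin in_V by (intro card_mono) auto
  then have card_B: "card B + 2 = card V"
    using fin in_V dist by (simp add: B_def card_Diff_subset)
  have "th_H V E \<le> enat (card B) + pt_H V E B" by (rule th_H_le_card_plus_pt_H) (simp add: B_def)
  also have "\<dots> \<le> enat (card B) + 1" using pt by (rule add_left_mono)
  also have "\<dots> < enat (card V)" using card_B by (simp add: one_enat_def)
  finally show ?thesis .
qed

lemma hop_seq_ok_forces:
  "hop_seq_ok V E S P fs \<Longrightarrow> snd ` set fs \<subseteq> V \<and> fst ` set fs \<inter> P = {} \<and> distinct (map fst fs)"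
proof (induction fs arbitrary: S P)
  case (Cons f fs)
  obtain v w where f: "f = (v, w)" by fastforce
  with Cons.prems have "hop_force_ok V E S P v w"
    and "hop_seq_ok V E (insert w S) (insert v P) fs" by auto
  with Cons.IH f show ?case unfolding hop_force_ok_def by force
qed simp

lemma chron_list_forces:
  "chron_list V E B fs \<Longrightarrow> snd ` set fs \<subseteq> V \<and> inj_on fst (set fs)"
  unfolding chron_list_def using hop_seq_ok_forces distinct_map by blast

lemma hop_U_subset:
  "B \<subseteq> V \<Longrightarrow> snd ` F \<subseteq> V \<Longrightarrow> hop_U V E B F t \<subseteq> V"
  by (induction t) force+

lemma card_forced_in_one_round_le_1:
  assumes "finite V" and "\<not> has_unlinked_pairs V E"
    and "A \<subseteq> V" and "snd ` F \<subseteq> V" and "inj_on fst F"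
  shows "card {w. w \<notin> A \<and> (\<exists>v. (v, w) \<in> F \<and> v \<in> A \<and> nbhd V E v \<subseteq> A)} \<le> 1"
    (is "card ?N \<le> 1")
proof -
  have N_V: "?N \<subseteq> V" using assms(4) by force
  have "x = y" if x: "x \<in> ?N" and y: "y \<in> ?N" for x y
  proof (rule ccontr)
    assume "x \<noteq> y"
    obtain u v where u: "(u, x) \<in> F" "u \<in> A" "nbhd V E u \<subseteq> A" "x \<notin> A"
      and v: "(v, y) \<in> F" "v \<in> A" "nbhd V E v \<subseteq> A" "y \<notin> A"
      using x y by blast
    have no_edge: "\<not> E s t" if "nbhd V E s \<subseteq> A" "t \<in> V" "t \<notin> A" for s t
      using that by (auto simp: nbhd_def)
    have "u \<noteq> v" using \<open>x \<noteq> y\<close> u(1) v(1) assms(5) unfolding inj_on_def by force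
    then have "distinct [u, v, x, y]" using u v \<open>x \<noteq> y\<close> by auto
    moreover have "{u, v, x, y} \<subseteq> V" using u(2) v(2) x y N_V assms(3) by auto
    moreover have "\<not> E u x" "\<not> E u y" "\<not> E v x" "\<not> E v y"
      using no_edge u v x y N_V by blast+
    ultimately have "has_unlinked_pairs V E" unfolding has_unlinked_pairs_def by blast
    with assms(2) show False ..
  qed
  then show ?thesis
    using finite_subset[OF N_V assms(1)] by (simp add: card_le_Suc0_iff_eq)
qed

lemma card_hop_U_le:
  assumes "finite V" and "\<not> has_unlinked_pairs V E"
    and "B \<subseteq> V" and "snd ` F \<subseteq> V" and "inj_on fst F"
  shows "card (hop_U V E B F t) \<le> card B + t"
proof (induction t)
  case (Suc t)
  let ?A = "hop_U V E B F t"
  have "card (hop_U V E B F (Suc t)) \<le> card ?A +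
      card {w. w \<notin> ?A \<and> (\<exists>v. (v, w) \<in> F \<and> v \<in> ?A \<and> nbhd V E v \<subseteq> ?A)}"
    by (simp add: card_Un_le)
  also have "\<dots> \<le> card B + Suc t"
    using Suc.IH
      card_forced_in_one_round_le_1[OF assms(1,2) hop_U_subset[OF assms(3,4), of E t] assms(4,5)]
    by linarith
  finally show ?case .
qed simp

lemma card_le_th_H:
  assumes "simple_graph V E" and "\<not> has_unlinked_pairs V E"
  shows "enat (card V) \<le> th_H V E"
  unfolding th_H_def
proof (rule INF_greatest)
  fix B assume "B \<in> Pow V"
  have fin: "finite V" using assms(1) unfolding simple_graph_def by blast
  have "enat (card V - card B) \<le> pt_H_forces V E B (set fs)" if "chron_list V E B fs" for fs
  proof (cases "\<exists>t. hop_U V E B (set fs) t = V")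
    case True
    define T where "T = (LEAST t. hop_U V E B (set fs) t = V)"
    have "hop_U V E B (set fs) T = V" unfolding T_def by (rule LeastI_ex[OF True])
    then have "card V \<le> card B + T"
      using card_hop_U_le[OF fin assms(2) \<open>B \<in> Pow V\<close>[simplified]] chron_list_forces[OF that]
      by metis
    then show ?thesis unfolding pt_H_forces_def T_def[symmetric] using True by simp
  qed (simp add: pt_H_forces_def)
  then have "enat (card V - card B) \<le> pt_H V E B"
    unfolding pt_H_def sets_of_forces_def by (auto intro!: INF_greatest)
  moreover have "card B \<le> card V" using \<open>B \<in> Pow V\<close> fin by (simp add: card_mono)
  ultimately show "enat (card V) \<le> enat (card B) + pt_H V E B"
    by (cases "pt_H V E B") auto
qed

theorem mainTheorem16:
  fixes V :: "'a set" and E :: "'a \<Rightarrow> 'a \<Rightarrow> bool"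
  assumes "simple_graph V E"
  shows "th_H V E = enat (card V) \<longleftrightarrow>
    \<not> has_induced V E {0::nat..3} two_K2_E \<and>
    \<not> has_induced V E {0::nat..3} K2_co_K2_E \<and>
    \<not> has_induced V E {0::nat..3} co_K4_E"
proof -
  have "th_H V E = enat (card V) \<longleftrightarrow> \<not> has_unlinked_pairs V E"
    using th_H_le_card[of V E] card_le_th_H[OF assms] th_H_less_card_if_unlinked_pairs[OF assms]
    by (metis antisym less_irrefl)
  then show ?thesis using forbidden_induced_iff_unlinked_pairs[OF assms] by blast
qed

end
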